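(* Every finite connected graph has a metric basis that contains no cut-vertices.
   Context: All graphs are simple. For vertices $u,v$ of a connected graph $G$, $d(u,v)$ is the length of a shortest $u$–$v$ path. A set $R\subseteq V(G)$ is a resolving set if for all distinct $x,y\in V(G)$ there is $r\in R$ with $d(r,x)\neq d(r,y)$. The metric dimension $\dim(G)$ is the minimum cardinality of a resolving set, and a resolving set of cardinality $\dim(G)$ is a metric basis. A cut-vertex is a vertex $v$ such that $G-v$ is disconnected. *)

theory Defs
  imports Main
begin

(* A simple graph is given by a vertex set V and a symmetric irreflexive
   edge relation E.  All walks are taken inside the vertex set V, so
   "E restricted to V" is the graph. *)

definition simple_graph :: "('a \<Rightarrow> 'a \<Rightarrow> bool) \<Rightarrow> 'a set \<Rightarrow> bool" where
  "simple_graph E V \<longleftrightarrow> (\<forall>x y. E x y \<longrightarrow> E y x) \<and> (\<forall>x. \<not> E x x)"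

fun walk :: "('a \<Rightarrow> 'a \<Rightarrow> bool) \<Rightarrow> 'a set \<Rightarrow> 'a list \<Rightarrow> bool" where
  "walk E V [] = False"
| "walk E V [x] = (x \<in> V)"
| "walk E V (x # y # xs) = (x \<in> V \<and> E x y \<and> walk E V (y # xs))"

definition connected_graph :: "('a \<Rightarrow> 'a \<Rightarrow> bool) \<Rightarrow> 'a set \<Rightarrow> bool" where
  "connected_graph E V \<longleftrightarrow>
     (\<forall>u\<in>V. \<forall>v\<in>V. \<exists>p. walk E V p \<and> hd p = u \<and> last p = v)"

definition dist :: "('a \<Rightarrow> 'a \<Rightarrow> bool) \<Rightarrow> 'a set \<Rightarrow> 'a \<Rightarrow> 'a \<Rightarrow> nat" where
  "dist E V u v = (LEAST n. \<exists>p. walk E V p \<and> hd p = u \<and> last p = v \<and> length p = Suc n)"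

definition resolving_set :: "('a \<Rightarrow> 'a \<Rightarrow> bool) \<Rightarrow> 'a set \<Rightarrow> 'a set \<Rightarrow> bool" where
  "resolving_set E V R \<longleftrightarrow> R \<subseteq> V \<and>
     (\<forall>x\<in>V. \<forall>y\<in>V. x \<noteq> y \<longrightarrow> (\<exists>r\<in>R. dist E V r x \<noteq> dist E V r y))"

definition metric_dim :: "('a \<Rightarrow> 'a \<Rightarrow> bool) \<Rightarrow> 'a set \<Rightarrow> nat" where
  "metric_dim E V = (LEAST k. \<exists>R. resolving_set E V R \<and> card R = k)"

definition metric_basis :: "('a \<Rightarrow> 'a \<Rightarrow> bool) \<Rightarrow> 'a set \<Rightarrow> 'a set \<Rightarrow> bool" where
  "metric_basis E V R \<longleftrightarrow> resolving_set E V R \<and> card R = metric_dim E V"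

definition cut_vertex :: "('a \<Rightarrow> 'a \<Rightarrow> bool) \<Rightarrow> 'a set \<Rightarrow> 'a \<Rightarrow> bool" where
  "cut_vertex E V v \<longleftrightarrow> v \<in> V \<and> \<not> connected_graph E (V - {v})"

end

(* Take a metric basis R with the fewest cut vertices and suppose it contains a cut vertex v.
   A vertex r outside the component of G - v containing y sees y only through v, so
   d(r,y) = d(r,v) + d(v,y); hence v is redundant as soon as R - {v} meets two components
   of G - v, and since |R| = dim G, the set R - {v} must avoid some component C. No second
   component is avoided: neighbours of v in two avoided components would not be resolved.
   Replacing v by a vertex w of C farthest from v therefore gives a basis again, and w is
   not a cut vertex because every vertex reaches v along a shortest path that avoids w. *)

theory Submission
  imports Defs
begin

definition reachable :: "('a \<Rightarrow> 'a \<Rightarrow> bool) \<Rightarrow> 'a set \<Rightarrow> 'a \<Rightarrow> 'a \<Rightarrow> bool" where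
  "reachable E W x y \<longleftrightarrow> (\<exists>p. walk E W p \<and> hd p = x \<and> last p = y)"

lemma connected_graph_iff_reachable:
  "connected_graph E W \<longleftrightarrow> (\<forall>u\<in>W. \<forall>v\<in>W. reachable E W u v)"
  unfolding connected_graph_def reachable_def ..

lemma walk_not_Nil: "walk E W p \<Longrightarrow> p \<noteq> []"
  by (cases p) auto

lemma walk_subset: "walk E W p \<Longrightarrow> set p \<subseteq> W"
  by (induction E W p rule: walk.induct) auto

lemma walk_mono: "walk E W p \<Longrightarrow> set p \<subseteq> W' \<Longrightarrow> walk E W' p"
  by (induction E W p rule: walk.induct) auto

lemma walk_Cons: "walk E W (x # p) \<longleftrightarrow> x \<in> W \<and> (p = [] \<or> E x (hd p) \<and> walk E W p)"
  by (cases p) auto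

lemma walk_split: "walk E W (xs @ y # ys) \<longleftrightarrow> walk E W (xs @ [y]) \<and> walk E W (y # ys)"
proof (induction xs)
  case (Cons a xs)
  then show ?case by (cases xs) simp_all
qed (cases ys; simp)

lemma last_append_tl: "p \<noteq> [] \<Longrightarrow> q \<noteq> [] \<Longrightarrow> last p = hd q \<Longrightarrow> last (p @ tl q) = last q"
  by (cases q) auto

lemma walk_join:
  assumes p: "walk E W p" and q: "walk E W q" and pq: "last p = hd q"
  shows "walk E W (p @ tl q)"
proof -
  have "p @ tl q = butlast p @ hd q # tl q"
    using walk_not_Nil[OF p] pq by (metis append_butlast_last_id append_Cons append_Nil append_assoc)
  moreover have "walk E W (butlast p @ [hd q])"
    using p pq walk_not_Nil by (metis append_butlast_last_id)
  moreover have "walk E W (hd q # tl q)"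
    using q walk_not_Nil by (metis list.collapse)
  ultimately show ?thesis using walk_split by metis
qed

lemma walk_rev: "symp E \<Longrightarrow> walk E W p \<Longrightarrow> walk E W (rev p)"
proof (induction E W p rule: walk.induct)
  case (3 E W x y xs)
  then have "walk E W (rev xs @ [y])" "walk E W [y, x]"
    by (auto simp: walk_Cons dest: sympD)
  then show ?case using walk_split by fastforce
qed auto

lemma reachable_refl: "x \<in> W \<Longrightarrow> reachable E W x x"
  unfolding reachable_def by (rule exI[of _ "[x]"]) auto

lemma reachable_in: "reachable E W x y \<Longrightarrow> x \<in> W \<and> y \<in> W"
  unfolding reachable_def using walk_subset walk_not_Nil hd_in_set last_in_set by blast

lemma reachable_Cons: "x \<in> W \<Longrightarrow> E x y \<Longrightarrow> reachable E W y z \<Longrightarrow> reachable E W x z"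
  unfolding reachable_def
proof (elim exE conjE)
  fix p assume "x \<in> W" "E x y" "walk E W p" "hd p = y" "last p = z"
  then show "\<exists>p'. walk E W p' \<and> hd p' = x \<and> last p' = z"
    using walk_not_Nil by (intro exI[of _ "x # p"]) (auto simp: walk_Cons)
qed

lemma reachable_sym: "symp E \<Longrightarrow> reachable E W x y \<Longrightarrow> reachable E W y x"
  unfolding reachable_def
proof (elim exE conjE)
  fix p assume "symp E" "walk E W p" "hd p = x" "last p = y"
  then show "\<exists>p'. walk E W p' \<and> hd p' = y \<and> last p' = x"
    using walk_not_Nil walk_rev by (intro exI[of _ "rev p"]) (auto simp: hd_rev last_rev)
qed

lemma reachable_trans: "reachable E W x y \<Longrightarrow> reachable E W y z \<Longrightarrow> reachable E W x z"
  unfolding reachable_def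
proof (elim exE conjE)
  fix p q assume p: "walk E W p" "hd p = x" "last p = y"
    and q: "walk E W q" "hd q = y" "last q = z"
  have "hd (p @ tl q) = x"
    using p walk_not_Nil[OF p(1)] by simp
  moreover have "last (p @ tl q) = z"
    using p q walk_not_Nil[OF p(1)] walk_not_Nil[OF q(1)] by (simp add: last_append_tl)
  ultimately show "\<exists>p'. walk E W p' \<and> hd p' = x \<and> last p' = z"
    using walk_join[OF p(1) q(1)] p(3) q(2) by auto
qed

lemma reachable_maximizer:
  fixes f :: "'a \<Rightarrow> 'b::linorder"
  assumes "finite W" "a \<in> W"
  obtains w where "reachable E W a w" "\<And>u. reachable E W a u \<Longrightarrow> f u \<le> f w"
proof -
  define C where "C = {u. reachable E W a u}"
  have "finite C"
    using reachable_in[of E W a] finite_subset[OF _ \<open>finite W\<close>] unfolding C_def by blast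
  moreover have "a \<in> C"
    using reachable_refl[OF \<open>a \<in> W\<close>] unfolding C_def by simp
  ultimately have "Max (f ` C) \<in> f ` C"
    by (intro Max_in) auto
  then obtain w where "w \<in> C" "f w = Max (f ` C)"
    by (metis imageE)
  then show ?thesis
    using that \<open>finite C\<close> unfolding C_def by simp
qed

lemma resolving_set_mono:
  "resolving_set E V R \<Longrightarrow> R \<subseteq> R' \<Longrightarrow> R' \<subseteq> V \<Longrightarrow> resolving_set E V R'"
  unfolding resolving_set_def by blast

lemma metric_dim_le_card: "resolving_set E V R \<Longrightarrow> metric_dim E V \<le> card R"
  unfolding metric_dim_def by (rule Least_le) blast

locale connected_simple_graph =
  fixes E :: "'a \<Rightarrow> 'a \<Rightarrow> bool" and V :: "'a set"
  assumes simple: "simple_graph E V" and connected: "connected_graph E V"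
begin

lemma symp_edge: "symp E"
  using simple unfolding simple_graph_def symp_def by blast

lemma edge_irrefl: "\<not> E x x"
  using simple unfolding simple_graph_def by blast

lemma dist_less_length:
  assumes "walk E V p"
  shows "dist E V (hd p) (last p) < length p"
proof -
  have "length p = Suc (length p - 1)"
    using walk_not_Nil[OF assms] by simp
  then have "dist E V (hd p) (last p) \<le> length p - 1"
    unfolding dist_def using assms by (intro Least_le) blast
  then show ?thesis
    using walk_not_Nil[OF assms] by (cases p) auto
qed

lemma shortest_walk:
  assumes "u \<in> V" "v \<in> V"
  obtains p where "walk E V p" "hd p = u" "last p = v" "length p = Suc (dist E V u v)"
proof -
  obtain p where p: "walk E V p" "hd p = u" "last p = v"
    using connected assms unfolding connected_graph_def by blast
  then have "length p = Suc (length p - 1)"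
    using walk_not_Nil by fastforce
  then have "\<exists>n p. walk E V p \<and> hd p = u \<and> last p = v \<and> length p = Suc n"
    using p by blast
  then have "\<exists>p. walk E V p \<and> hd p = u \<and> last p = v \<and> length p = Suc (dist E V u v)"
    unfolding dist_def by (rule LeastI_ex)
  then show ?thesis
    using that by blast
qed

lemma dist_self: "u \<in> V \<Longrightarrow> dist E V u u = 0"
  using dist_less_length[of "[u]"] by simp

lemma dist_eq_0D:
  assumes "u \<in> V" "v \<in> V" "dist E V u v = 0"
  shows "u = v"
proof -
  obtain p where "hd p = u" "last p = v" "length p = Suc (dist E V u v)"
    using shortest_walk[OF assms(1,2)] .
  then show ?thesis
    using assms(3) by (cases p) auto
qed

lemma dist_commute:
  assumes "u \<in> V" "v \<in> V"
  shows "dist E V u v = dist E V v u"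
proof -
  have le: "dist E V y x \<le> dist E V x y" if "x \<in> V" "y \<in> V" for x y
  proof -
    obtain p where p: "walk E V p" "hd p = x" "last p = y" "length p = Suc (dist E V x y)"
      using shortest_walk \<open>x \<in> V\<close> \<open>y \<in> V\<close> by blast
    have "dist E V (hd (rev p)) (last (rev p)) < length (rev p)"
      using dist_less_length walk_rev[OF symp_edge p(1)] by blast
    then show ?thesis
      using p walk_not_Nil[OF p(1)] by (simp add: hd_rev last_rev)
  qed
  show ?thesis
    using le[of u v] le[of v u] assms by simp
qed

lemma dist_triangle:
  assumes "u \<in> V" "v \<in> V" "w \<in> V"
  shows "dist E V u w \<le> dist E V u v + dist E V v w"
proof -
  obtain p where p: "walk E V p" "hd p = u" "last p = v" "length p = Suc (dist E V u v)"
    using shortest_walk assms by blast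
  obtain q where q: "walk E V q" "hd q = v" "last q = w" "length q = Suc (dist E V v w)"
    using shortest_walk assms by blast
  have "hd (p @ tl q) = u" "last (p @ tl q) = w"
    using p q walk_not_Nil[OF p(1)] walk_not_Nil[OF q(1)] by (simp_all add: last_append_tl)
  then have "dist E V u w < length (p @ tl q)"
    using dist_less_length[OF walk_join[OF p(1) q(1)]] p(3) q(2) by simp
  then show ?thesis
    using p q by simp
qed

lemma dist_edge:
  assumes "u \<in> V" "v \<in> V" "E u v"
  shows "dist E V u v = 1"
proof -
  have "dist E V u v < 2"
    using dist_less_length[of "[u, v]"] assms by simp
  moreover have "dist E V u v \<noteq> 0"
    using dist_eq_0D assms edge_irrefl by blast
  ultimately show ?thesis
    by simp
qed

lemma dist_step:
  assumes "u \<in> V" "v \<in> V" "u \<noteq> v"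
  obtains u' where "u' \<in> V" "E u u'" "dist E V u v = Suc (dist E V u' v)"
proof -
  obtain p where p: "walk E V p" "hd p = u" "last p = v" "length p = Suc (dist E V u v)"
    using shortest_walk assms(1,2) by blast
  then obtain q where q: "p = u # q"
    using walk_not_Nil by (cases p) auto
  then have "q \<noteq> []"
    using p(3) assms(3) by auto
  then have q_walk: "walk E V q" "E u (hd q)"
    using p(1) q by (auto simp: walk_Cons)
  then have "hd q \<in> V"
    using walk_subset \<open>q \<noteq> []\<close> by fastforce
  have "dist E V (hd q) v < length q"
    using dist_less_length[OF q_walk(1)] p(3) q \<open>q \<noteq> []\<close> by simp
  moreover have "dist E V u v \<le> dist E V u (hd q) + dist E V (hd q) v"
    using dist_triangle assms \<open>hd q \<in> V\<close> by blast
  moreover have "dist E V u (hd q) = 1"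
    using dist_edge assms(1) \<open>hd q \<in> V\<close> q_walk(2) by blast
  ultimately show ?thesis
    using that[of "hd q"] \<open>hd q \<in> V\<close> q_walk(2) p(4) q by simp
qed

lemma dist_through_separator:
  assumes "r \<in> V" "v \<in> V" "x \<in> V" and sep: "\<not> reachable E (V - {v}) r x"
  shows "dist E V r x = dist E V r v + dist E V v x"
proof -
  obtain p where p: "walk E V p" "hd p = r" "last p = x" "length p = Suc (dist E V r x)"
    using shortest_walk assms(1,3) by blast
  have "v \<in> set p"
  proof (rule ccontr)
    assume "v \<notin> set p"
    then have "set p \<subseteq> V - {v}"
      using walk_subset[OF p(1)] by blast
    then have "walk E (V - {v}) p"
      by (rule walk_mono[OF p(1)])
    then show False
      using sep p(2,3) unfolding reachable_def by blast
  qed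
  then obtain p1 p2 where p12: "p = p1 @ v # p2"
    using split_list by metis
  then have w: "walk E V (p1 @ [v])" "walk E V (v # p2)"
    using p(1) walk_split[of E V p1 v p2] by blast+
  have "hd (p1 @ [v]) = r"
    using p(2) p12 by (cases p1) simp_all
  then have "dist E V r v < length (p1 @ [v])"
    using dist_less_length[OF w(1)] by simp
  moreover have "dist E V v x < length (v # p2)"
    using dist_less_length[OF w(2)] p(3) p12 by simp
  ultimately have "dist E V r v + dist E V v x \<le> dist E V r x"
    using p(4) p12 by simp
  then show ?thesis
    using dist_triangle[OF assms(1-3)] by simp
qed

lemma neighbour_in_component:
  assumes "a \<in> V" "v \<in> V" "a \<noteq> v"
  obtains x where "reachable E (V - {v}) a x" "E x v"
proof -
  obtain p where p: "walk E V p" "hd p = a" "last p = v"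
    using connected assms(1,2) unfolding connected_graph_def by blast
  then have "v \<in> set p"
    using walk_not_Nil last_in_set by metis
  then obtain ys zs where yz: "p = ys @ v # zs" "v \<notin> set ys"
    using split_list_first by metis
  then have "ys \<noteq> []"
    using p(2) assms(3) by auto
  then obtain xs x where x: "ys = xs @ [x]"
    using rev_exhaust by blast
  have "walk E V ((xs @ [x]) @ [v])"
    using p(1) walk_split[of E V ys v zs] yz(1) x by blast
  then have "walk E V (xs @ [x])" "walk E V [x, v]"
    using walk_split[of E V xs x "[v]"] by simp_all
  moreover have "set (xs @ [x]) \<subseteq> V - {v}"
    using walk_subset[OF p(1)] yz x by auto
  ultimately have "walk E (V - {v}) (xs @ [x])" "E x v"
    using walk_mono by (blast, simp)
  moreover have "hd (xs @ [x]) = a"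
    using p(2) yz(1) x by (cases xs) simp_all
  ultimately show ?thesis
    using that unfolding reachable_def by fastforce
qed

lemma resolving_set_remove_separator:
  assumes res: "resolving_set E V (insert v T)"
    and t: "t1 \<in> T" "t2 \<in> T" "\<not> reachable E (V - {v}) t1 t2"
  shows "resolving_set E V T"
proof -
  have "v \<in> V" "T \<subseteq> V"
    using res unfolding resolving_set_def by auto
  have separated: "\<exists>t\<in>T. dist E V t x \<noteq> dist E V t y"
    if "x \<in> V" "y \<in> V" "dist E V v x < dist E V v y" for x y
  proof -
    obtain t where "t \<in> T" "\<not> reachable E (V - {v}) t y"
      using t reachable_trans reachable_sym[OF symp_edge] by metis
    then have "t \<in> V"
      using \<open>T \<subseteq> V\<close> by blast
    have "dist E V t x \<le> dist E V t v + dist E V v x"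
      using dist_triangle \<open>t \<in> V\<close> \<open>v \<in> V\<close> that(1) by blast
    also have "\<dots> < dist E V t v + dist E V v y"
      using that(3) by simp
    also have "\<dots> = dist E V t y"
      using dist_through_separator \<open>t \<in> V\<close> \<open>v \<in> V\<close> that(2)
        \<open>\<not> reachable E (V - {v}) t y\<close> by simp
    finally show ?thesis
      using \<open>t \<in> T\<close> by (metis less_irrefl)
  qed
  show ?thesis
    unfolding resolving_set_def
  proof (intro conjI ballI impI)
    fix x y assume xy: "x \<in> V" "y \<in> V" "x \<noteq> y"
    then obtain r where "r \<in> insert v T" "dist E V r x \<noteq> dist E V r y"
      using res unfolding resolving_set_def by blast
    then show "\<exists>t\<in>T. dist E V t x \<noteq> dist E V t y"
      using separated[of x y] separated[of y x] xy by (metis insert_iff linorder_neqE_nat)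
  qed (fact \<open>T \<subseteq> V\<close>)
qed

(* Neighbours of v in two avoided components are at distance 1 from v and at distance
   d(r,v) + 1 from every other r in R. *)
lemma resolving_set_unique_avoided_component:
  assumes res: "resolving_set E V R" and "v \<in> R"
    and a: "a \<in> V - {v}" "\<forall>s\<in>R - {v}. \<not> reachable E (V - {v}) s a"
    and b: "b \<in> V - {v}" "\<forall>s\<in>R - {v}. \<not> reachable E (V - {v}) s b"
  shows "reachable E (V - {v}) a b"
proof (rule ccontr)
  assume ab: "\<not> reachable E (V - {v}) a b"
  have "R \<subseteq> V"
    using res unfolding resolving_set_def by blast
  with \<open>v \<in> R\<close> have "v \<in> V" by blast
  obtain xa where xa: "reachable E (V - {v}) a xa" "E xa v"
    using neighbour_in_component a(1) \<open>v \<in> V\<close> by blast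
  obtain xb where xb: "reachable E (V - {v}) b xb" "E xb v"
    using neighbour_in_component b(1) \<open>v \<in> V\<close> by blast
  have "xa \<in> V" "xb \<in> V"
    using reachable_in[OF xa(1)] reachable_in[OF xb(1)] by auto
  have "xa \<noteq> xb"
    using ab xa(1) xb(1) reachable_trans reachable_sym[OF symp_edge] by metis
  have "dist E V v xa = 1" "dist E V v xb = 1"
    using dist_edge \<open>v \<in> V\<close> \<open>xa \<in> V\<close> \<open>xb \<in> V\<close> xa(2) xb(2) sympD[OF symp_edge] by blast+
  have unreached: "\<not> reachable E (V - {v}) r x"
    if "\<forall>s\<in>R - {v}. \<not> reachable E (V - {v}) s c" "reachable E (V - {v}) c x" "r \<in> R - {v}"
    for r c x
    using that reachable_trans reachable_sym[OF symp_edge] by metis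
  have "dist E V r xa = dist E V r xb" if "r \<in> R" for r
  proof (cases "r = v")
    case True
    then show ?thesis
      using \<open>dist E V v xa = 1\<close> \<open>dist E V v xb = 1\<close> by simp
  next
    case False
    with that have "r \<in> R - {v}" "r \<in> V"
      using \<open>R \<subseteq> V\<close> by auto
    then have "dist E V r xa = dist E V r v + 1" "dist E V r xb = dist E V r v + 1"
      using dist_through_separator unreached[OF a(2) xa(1)] unreached[OF b(2) xb(1)]
        \<open>v \<in> V\<close> \<open>xa \<in> V\<close> \<open>xb \<in> V\<close> \<open>dist E V v xa = 1\<close> \<open>dist E V v xb = 1\<close> by simp_all
    then show ?thesis
      by simp
  qed
  then show False
    using res \<open>xa \<in> V\<close> \<open>xb \<in> V\<close> \<open>xa \<noteq> xb\<close> unfolding resolving_set_def by blast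
qed

(* If a shortest path from u to v stepped onto w, then u would lie in the component of w
   in G - v and be farther from v than w. *)
lemma farthest_in_component_not_cut_vertex:
  assumes "v \<in> V" "w \<in> V - {v}"
    and farthest: "\<And>u. reachable E (V - {v}) w u \<Longrightarrow> dist E V v u \<le> dist E V v w"
  shows "\<not> cut_vertex E V w"
proof -
  have "reachable E (V - {w}) u v" if "u \<in> V - {w}" for u
    using that
  proof (induction "dist E V u v" arbitrary: u rule: less_induct)
    case less
    show ?case
    proof (cases "u = v")
      case True
      then show ?thesis
        using less.prems reachable_refl by metis
    next
      case False
      then obtain u' where u': "u' \<in> V" "E u u'" "dist E V u v = Suc (dist E V u' v)"
        using dist_step less.prems \<open>v \<in> V\<close> by blast
      have "u' \<noteq> w"
      proof
        assume "u' = w"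
        have "u \<in> V - {v}"
          using less.prems False by blast
        then have "reachable E (V - {v}) w u"
          using reachable_Cons[OF assms(2) _ reachable_refl] sympD[OF symp_edge u'(2)] \<open>u' = w\<close>
          by blast
        then have "dist E V v u \<le> dist E V v w"
          by (rule farthest)
        then show False
          using u'(3) \<open>u' = w\<close> dist_commute less.prems assms by auto
      qed
      then have "reachable E (V - {w}) u' v"
        using less.hyps u' by simp
      then show ?thesis
        using reachable_Cons less.prems u'(2) by metis
    qed
  qed
  then have "connected_graph E (V - {w})"
    unfolding connected_graph_iff_reachable
    using reachable_trans reachable_sym[OF symp_edge] by metis
  then show ?thesis
    unfolding cut_vertex_def by blast
qed

lemma cut_vertex_unreachable:
  assumes "cut_vertex E V v"
  obtains b where "b \<in> V - {v}" "\<not> reachable E (V - {v}) a b"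
proof -
  obtain b0 b1 where "b0 \<in> V - {v}" "b1 \<in> V - {v}" "\<not> reachable E (V - {v}) b0 b1"
    using assms unfolding cut_vertex_def connected_graph_iff_reachable by blast
  then show ?thesis
    using that reachable_trans reachable_sym[OF symp_edge] by metis
qed

lemma metric_basis_exists: "\<exists>R. metric_basis E V R"
proof -
  have "resolving_set E V V"
    unfolding resolving_set_def
  proof (intro conjI ballI impI)
    fix x y assume "x \<in> V" "y \<in> V" "x \<noteq> y"
    then show "\<exists>r\<in>V. dist E V r x \<noteq> dist E V r y"
      using dist_self dist_eq_0D by metis
  qed simp
  then have "\<exists>k R. resolving_set E V R \<and> card R = k"
    by blast
  then have "\<exists>R. resolving_set E V R \<and> card R = metric_dim E V"
    unfolding metric_dim_def by (rule LeastI_ex)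
  then show ?thesis
    unfolding metric_basis_def .
qed

lemma metric_basis_avoids_component_of_cut_vertex:
  assumes "finite V" and basis: "metric_basis E V R" and "v \<in> R" "cut_vertex E V v"
  shows "\<exists>a\<in>V - {v}. \<forall>s\<in>R - {v}. \<not> reachable E (V - {v}) s a"
proof (rule ccontr)
  assume "\<not> ?thesis"
  then have covered: "\<forall>a\<in>V - {v}. \<exists>s\<in>R - {v}. reachable E (V - {v}) s a"
    by blast
  obtain a b where ab: "a \<in> V - {v}" "b \<in> V - {v}" "\<not> reachable E (V - {v}) a b"
    using \<open>cut_vertex E V v\<close> unfolding cut_vertex_def connected_graph_iff_reachable by blast
  obtain sa sb where s: "sa \<in> R - {v}" "sb \<in> R - {v}"
    "reachable E (V - {v}) sa a" "reachable E (V - {v}) sb b"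
    using covered ab(1,2) by blast
  then have "\<not> reachable E (V - {v}) sa sb"
    using ab(3) reachable_trans reachable_sym[OF symp_edge] by metis
  moreover have "resolving_set E V (insert v (R - {v}))"
    using basis \<open>v \<in> R\<close> unfolding metric_basis_def by (simp add: insert_absorb)
  ultimately have "resolving_set E V (R - {v})"
    using resolving_set_remove_separator s(1,2) by blast
  then have dim_le: "metric_dim E V \<le> card (R - {v})"
    by (rule metric_dim_le_card)
  have "finite R"
    using basis \<open>finite V\<close> finite_subset unfolding metric_basis_def resolving_set_def by blast
  then have "card R = Suc (card (R - {v}))"
    using \<open>v \<in> R\<close> by (rule card.remove)
  then show False
    using dim_le basis unfolding metric_basis_def by linarith
qed

lemma metric_basis_exchange_cut_vertex:
  assumes "finite V" and basis: "metric_basis E V R" and "v \<in> R" "cut_vertex E V v"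
  obtains w where "w \<notin> R" "\<not> cut_vertex E V w" "metric_basis E V (insert w (R - {v}))"
proof -
  let ?reach = "reachable E (V - {v})"
  have res: "resolving_set E V R" and card: "card R = metric_dim E V"
    using basis unfolding metric_basis_def by auto
  then have "R \<subseteq> V"
    unfolding resolving_set_def by blast
  then have "v \<in> V" "finite R"
    using \<open>v \<in> R\<close> \<open>finite V\<close> finite_subset by auto
  obtain a where a: "a \<in> V - {v}" "\<forall>s\<in>R - {v}. \<not> ?reach s a"
    using metric_basis_avoids_component_of_cut_vertex assms by blast
  obtain w where aw: "?reach a w" and w_max: "\<And>u. ?reach a u \<Longrightarrow> dist E V v u \<le> dist E V v w"
    using reachable_maximizer \<open>finite V\<close> a(1) by (metis finite_Diff)
  have "w \<in> V - {v}"
    using reachable_in[OF aw] by blast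
  then have "w \<notin> R"
    using a(2) reachable_sym[OF symp_edge aw] by blast
  have "\<not> cut_vertex E V w"
    using farthest_in_component_not_cut_vertex \<open>v \<in> V\<close> \<open>w \<in> V - {v}\<close>
      w_max reachable_trans[OF aw] by blast
  obtain b where b: "b \<in> V - {v}" "\<not> ?reach a b"
    using cut_vertex_unreachable \<open>cut_vertex E V v\<close> by blast
  then obtain s where s: "s \<in> R - {v}" "?reach s b"
    using resolving_set_unique_avoided_component[OF res \<open>v \<in> R\<close> a] by blast
  have "\<not> ?reach w s"
    using reachable_trans[OF reachable_trans[OF aw] s(2)] b(2) by blast
  moreover have "resolving_set E V (insert v (insert w (R - {v})))"
    by (rule resolving_set_mono[OF res]) (use \<open>R \<subseteq> V\<close> \<open>v \<in> V\<close> \<open>w \<in> V - {v}\<close> in auto)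
  ultimately have "resolving_set E V (insert w (R - {v}))"
    using resolving_set_remove_separator[of v "insert w (R - {v})" w s] s(1) by simp
  moreover have "card (insert w (R - {v})) = card R"
    using card.remove[OF \<open>finite R\<close> \<open>v \<in> R\<close>, symmetric] \<open>finite R\<close> \<open>w \<notin> R\<close> by simp
  ultimately show ?thesis
    using that \<open>w \<notin> R\<close> \<open>\<not> cut_vertex E V w\<close> card unfolding metric_basis_def by simp
qed

end

theorem corollary1:
  fixes E :: "'a \<Rightarrow> 'a \<Rightarrow> bool" and V :: "'a set"
  assumes "simple_graph E V" and "finite V" and "V \<noteq> {}"
    and "connected_graph E V"
  shows "\<exists>R. metric_basis E V R \<and> (\<forall>v\<in>R. \<not> cut_vertex E V v)"
proof -
  interpret connected_simple_graph E V
    using assms by unfold_locales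
  let ?cuts = "\<lambda>R. {r\<in>R. cut_vertex E V r}"
  obtain R where basis: "metric_basis E V R"
    and min: "\<And>R'. metric_basis E V R' \<Longrightarrow> card (?cuts R) \<le> card (?cuts R')"
    using metric_basis_exists ex_has_least_nat[of "metric_basis E V" _ "\<lambda>R. card (?cuts R)"]
    by metis
  have "\<not> cut_vertex E V v" if "v \<in> R" for v
  proof
    assume cut: "cut_vertex E V v"
    then obtain w where w: "\<not> cut_vertex E V w" "metric_basis E V (insert w (R - {v}))"
      using metric_basis_exchange_cut_vertex \<open>finite V\<close> basis \<open>v \<in> R\<close> by metis
    have "?cuts (insert w (R - {v})) = ?cuts R - {v}"
      using w(1) by auto
    moreover have "finite (?cuts R)"
      by (rule finite_subset[OF _ \<open>finite V\<close>]) (auto simp: cut_vertex_def)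
    moreover have "v \<in> ?cuts R"
      using \<open>v \<in> R\<close> cut by simp
    ultimately have "card (?cuts (insert w (R - {v}))) < card (?cuts R)"
      by (metis card_Diff1_less)
    then show False
      using min[OF w(2)] by simp
  qed
  then show ?thesis
    using basis by blast
qed

end
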